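(* Let $1\le d\le n$. If $x\in\mathbb{R}^n$ satisfies $e_{d-1}(x)=0$, then $$|e_d(x)|\ge \frac{\binom{n}{d}}{(2n^{d+1})^{n-d}}\,|m_d(x)|.$$
   Context: $e_k(x)=\sum_{S\subseteq[n],|S|=k}\prod_{i\in S}x_i$ is the $k$-th elementary symmetric polynomial (with $e_0=1$), and $m_d(x)=\max_{S\subseteq[n],|S|=d}\prod_{i\in S}|x_i|$ is the product of the $d$ largest entries of $x$ in absolute value. *)

theory Defs
  imports "HOL-Analysis.Analysis"
begin

text \<open>Vectors x in R^n are represented as functions x :: nat => real, using only
the coordinates x 0, ..., x (n-1) (index set {..<n}).\<close>

definition esym :: "nat \<Rightarrow> nat \<Rightarrow> (nat \<Rightarrow> real) \<Rightarrow> real" where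
  "esym n k x = (\<Sum>S\<in>{S. S \<subseteq> {..<n} \<and> card S = k}. \<Prod>i\<in>S. x i)"

definition mprod :: "nat \<Rightarrow> nat \<Rightarrow> (nat \<Rightarrow> real) \<Rightarrow> real" where
  "mprod n d x = Max ((\<lambda>S. \<Prod>i\<in>S. \<bar>x i\<bar>) ` {S. S \<subseteq> {..<n} \<and> card S = d})"

end

(*
  Differentiating the real-rooted polynomial \<Prod>(t + x i) and inverting the variables both preserve
  real-rootedness and act on the normalised means e_k / (n choose k) by truncation and reversal.
  Hence any block of means with indices d - i, ..., d + i is a multiple of the complete sequence of
  means of some z of length 2 i, and e_(d-1)(x) = 0 forces e_(i-1)(z) = 0. The identity
  \<Sum>j (-1)^j e_j e_(2d-j) = (-1)^d e_d(x^2) bounds e_d(x^2) by e_d(x)^2 plus the products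
  e_(d-i) e_(d+i); each of these is bounded through the 2 i variable case, which is settled first
  by induction, AM-GM handling its outermost product. Finally m_d(x)^2 \<le> e_d(x^2).
*)

theory Submission
  imports Defs "HOL-Computational_Algebra.Fundamental_Theorem_Algebra"
begin

abbreviation card_subsets :: "nat \<Rightarrow> nat \<Rightarrow> nat set set" where
  "card_subsets n k \<equiv> {S. S \<subseteq> {..<n} \<and> card S = k}"

lemma finite_card_subsets [simp]: "finite (card_subsets n k)"
  by (rule finite_subset[of _ "Pow {..<n}"]) auto

lemma card_card_subsets: "card (card_subsets n k) = n choose k"
  using n_subsets[of "{..<n}" k] by simp

lemma card_subsets_0: "card_subsets n 0 = {{}}"
  by (auto dest: finite_subset)

lemma card_subsets_self: "card_subsets n n = {{..<n}}"
  by (auto dest: card_subset_eq[rotated])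

lemma card_subsets_Suc_Suc:
  "card_subsets (Suc n) (Suc k) = card_subsets n (Suc k) \<union> insert n ` card_subsets n k"
proof -
  let ?Q = "card_subsets (Suc n) (Suc k)"
  have "?Q = {S\<in>?Q. n \<notin> S} \<union> {S\<in>?Q. n \<in> S}"
    by auto
  also have "{S\<in>?Q. n \<notin> S} = card_subsets n (Suc k)"
    by (auto simp: lessThan_Suc)
  also have "{S\<in>?Q. n \<in> S} = insert n ` card_subsets n k"
  proof (intro equalityI subsetI)
    fix S assume S: "S \<in> {S\<in>?Q. n \<in> S}"
    then have "finite S"
      by (blast intro: finite_subset[of S "{..<Suc n}"])
    with S have "S - {n} \<in> card_subsets n k"
      by (auto simp: less_Suc_eq)
    moreover have "S = insert n (S - {n})"
      using S by blast
    ultimately show "S \<in> insert n ` card_subsets n k"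
      by blast
  next
    fix S assume "S \<in> insert n ` card_subsets n k"
    then obtain T where T: "T \<subseteq> {..<n}" "card T = k" "S = insert n T"
      by blast
    then have "finite T" "n \<notin> T"
      by (auto dest: finite_subset)
    with T show "S \<in> {S\<in>?Q. n \<in> S}"
      by auto
  qed
  finally show ?thesis .
qed

lemma bij_betw_compl_card_subsets:
  assumes "k \<le> n"
  shows "bij_betw (\<lambda>S. {..<n} - S) (card_subsets n k) (card_subsets n (n - k))"
proof (rule bij_betw_byWitness[where f' = "\<lambda>S. {..<n} - S"])
  have "card ({..<n} - S) = n - card S" if "S \<subseteq> {..<n}" for S
    using that by (simp add: card_Diff_subset finite_subset)
  then show "(\<lambda>S. {..<n} - S) ` card_subsets n k \<subseteq> card_subsets n (n - k)"
    and "(\<lambda>S. {..<n} - S) ` card_subsets n (n - k) \<subseteq> card_subsets n k"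
    using assms by auto
qed auto

definition elem_sym :: "nat \<Rightarrow> nat \<Rightarrow> (nat \<Rightarrow> 'a::comm_ring_1) \<Rightarrow> 'a" where
  "elem_sym n k c = (\<Sum>S\<in>card_subsets n k. \<Prod>i\<in>S. c i)"

lemma esym_eq_elem_sym: "esym n k x = elem_sym n k x"
  by (simp add: esym_def elem_sym_def)

lemma elem_sym_0 [simp]: "elem_sym n 0 c = 1"
  by (simp add: elem_sym_def card_subsets_0)

lemma elem_sym_self: "elem_sym n n c = (\<Prod>i<n. c i)"
  by (simp add: elem_sym_def card_subsets_self)

lemma elem_sym_eq_0:
  assumes "n < k"
  shows "elem_sym n k c = 0"
proof -
  have "card_subsets n k = {}"
  proof (rule equals0I)
    fix S assume "S \<in> card_subsets n k"
    then have "card S \<le> n" and "card S = k"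
      using card_mono[OF finite_lessThan, of S n] by auto
    with assms show False
      by simp
  qed
  then show ?thesis
    by (simp only: elem_sym_def sum.empty)
qed

lemma elem_sym_Suc_Suc: "elem_sym (Suc n) (Suc k) c = elem_sym n (Suc k) c + c n * elem_sym n k c"
proof -
  have inj: "inj_on (insert n) (card_subsets n k)"
  proof (rule inj_onI)
    fix A B assume "A \<in> card_subsets n k" "B \<in> card_subsets n k" "insert n A = insert n B"
    moreover have "n \<notin> A" "n \<notin> B"
      using calculation by auto
    ultimately show "A = B"
      by (metis insert_ident)
  qed
  have "(\<Sum>S\<in>insert n ` card_subsets n k. \<Prod>i\<in>S. c i)
      = (\<Sum>S\<in>card_subsets n k. c n * (\<Prod>i\<in>S. c i))"
    unfolding sum.reindex[OF inj, unfolded comp_def]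
    by (intro sum.cong refl prod.insert) (auto dest: finite_subset)
  moreover have "card_subsets n (Suc k) \<inter> insert n ` card_subsets n k = {}"
    by auto
  ultimately show ?thesis
    by (simp add: elem_sym_def card_subsets_Suc_Suc sum.union_disjoint sum_distrib_left)
qed

lemma elem_sym_uminus: "elem_sym n k (\<lambda>i. - c i) = (-1) ^ k * elem_sym n k c"
  unfolding elem_sym_def sum_distrib_left by (intro sum.cong) (auto simp: prod_uminus)

lemma elem_sym_of_real: "elem_sym n k (\<lambda>i. of_real (x i)) = of_real (esym n k x)"
  by (simp add: elem_sym_def esym_def)

lemma coeff_prod_one_plus_linear:
  fixes c :: "nat \<Rightarrow> 'a::comm_ring_1"
  shows "coeff (\<Prod>i<n. [:1, c i:]) k = elem_sym n k c"
proof (induction n arbitrary: k)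
  case 0
  then show ?case by (cases k) (auto simp: elem_sym_eq_0)
next
  case (Suc n)
  have "(\<Prod>i<Suc n. [:1, c i:]) = (\<Prod>i<n. [:1, c i:]) + smult (c n) (pCons 0 (\<Prod>i<n. [:1, c i:]))"
    by (simp add: algebra_simps)
  with Suc.IH show ?case
    by (cases k) (simp_all add: elem_sym_Suc_Suc)
qed

lemma coeff_prod_one_plus_square:
  fixes c :: "nat \<Rightarrow> 'a::comm_ring_1"
  shows "coeff (\<Prod>i<n. [:1, 0, c i:]) (2 * k) = elem_sym n k c"
proof (induction n arbitrary: k)
  case 0
  then show ?case by (cases k) (auto simp: elem_sym_eq_0)
next
  case (Suc n)
  have "(\<Prod>i<Suc n. [:1, 0, c i:])
      = (\<Prod>i<n. [:1, 0, c i:]) + smult (c n) (pCons 0 (pCons 0 (\<Prod>i<n. [:1, 0, c i:])))"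
    by (simp add: algebra_simps)
  moreover have "2 * Suc j = Suc (Suc (2 * j))" for j :: nat
    by simp
  ultimately show ?case
    using Suc.IH[of 0] Suc.IH[of k] Suc.IH[of "k - 1"]
    by (cases k) (simp_all add: elem_sym_Suc_Suc)
qed

lemma coeff_prod_monic_linear:
  fixes c :: "nat \<Rightarrow> 'a::comm_ring_1"
  assumes "k \<le> n"
  shows "coeff (\<Prod>i<n. [:c i, 1:]) k = elem_sym n (n - k) c"
  using assms
proof (induction n arbitrary: k)
  case 0
  then show ?case by simp
next
  case (Suc n)
  let ?P = "\<Prod>i<n. [:c i, 1:]"
  have P: "(\<Prod>i<Suc n. [:c i, 1:]) = smult (c n) ?P + pCons 0 ?P"
    by (simp add: algebra_simps)
  have "degree ?P \<le> n"
    using degree_prod_sum_le[of "{..<n}" "\<lambda>i. [:c i, 1:]"] by simp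
  then have top: "coeff ?P (Suc n) = 0"
    by (simp add: coeff_eq_0)
  show ?case
  proof (cases k)
    case 0
    with P Suc.IH[of 0] show ?thesis
      by (simp add: elem_sym_Suc_Suc elem_sym_eq_0)
  next
    case (Suc j)
    with Suc.prems have "j \<le> n" by simp
    show ?thesis
    proof (cases "j = n")
      case True
      with P top Suc.IH[of n] \<open>k = Suc j\<close> show ?thesis by simp
    next
      case False
      with \<open>j \<le> n\<close> have "Suc n - Suc j = Suc (n - Suc j)" "n - j = Suc (n - Suc j)"
        by auto
      with P Suc.IH[of j] Suc.IH[of "Suc j"] \<open>j \<le> n\<close> \<open>j \<noteq> n\<close> \<open>k = Suc j\<close>
      show ?thesis
        by (simp add: elem_sym_Suc_Suc algebra_simps)
    qed
  qed
qed

lemma elem_sym_squares: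
  fixes c :: "nat \<Rightarrow> 'a::comm_ring_1"
  shows "(\<Sum>j\<le>2*k. (-1)^j * (elem_sym n j c * elem_sym n (2*k - j) c)) = (-1)^k * elem_sym n k (\<lambda>i. c i ^ 2)"
proof -
  let ?A = "\<Prod>i<n. [:1, c i:]" and ?B = "\<Prod>i<n. [:1, - c i:]"
  have "?A * ?B = (\<Prod>i<n. [:1, c i:] * [:1, - c i:])"
    by (rule prod.distrib[symmetric])
  also have "\<dots> = (\<Prod>i<n. [:1, 0, - (c i ^ 2):])"
    by (simp add: power2_eq_square)
  finally have AB: "?A * ?B = (\<Prod>i<n. [:1, 0, - (c i ^ 2):])" .
  have sign: "(-1 :: 'a) ^ (2*k - j) = (-1) ^ j" if "j \<le> 2*k" for j
  proof -
    have "(-1 :: 'a) ^ (2*k - j) = (-1) ^ (2*k + j)"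
      by (rule neg_one_power_add_eq_neg_one_power_diff[OF that, symmetric])
    then show ?thesis
      by (simp add: power_add)
  qed
  have "(\<Sum>j\<le>2*k. (-1)^j * (elem_sym n j c * elem_sym n (2*k - j) c))
      = (\<Sum>j\<le>2*k. coeff ?A j * coeff ?B (2*k - j))"
    by (intro sum.cong) (simp_all add: coeff_prod_one_plus_linear elem_sym_uminus sign)
  also have "\<dots> = coeff (?A * ?B) (2*k)"
    by (simp add: coeff_mult)
  also have "\<dots> = (-1)^k * elem_sym n k (\<lambda>i. c i ^ 2)"
    by (simp add: AB coeff_prod_one_plus_square elem_sym_uminus)
  finally show ?thesis .
qed

lemma sum_atMost_double:
  fixes g :: "nat \<Rightarrow> 'a::comm_monoid_add"
  shows "(\<Sum>j\<le>2*d. g j) = g d + (\<Sum>i=1..d. g (d - i) + g (d + i))"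
proof -
  have split: "{..2*d} = {..<d} \<union> insert d {d<..2*d}"
    by auto
  have "(\<Sum>j\<le>2*d. g j) = (\<Sum>j<d. g j) + (\<Sum>j\<in>insert d {d<..2*d}. g j)"
    unfolding split by (rule sum.union_disjoint) auto
  also have "(\<Sum>j\<in>insert d {d<..2*d}. g j) = g d + (\<Sum>j\<in>{d<..2*d}. g j)"
    by simp
  also have "(\<Sum>j<d. g j) = (\<Sum>i=1..d. g (d - i))"
    by (rule sum.reindex_bij_witness[of _ "\<lambda>i. d - i" "\<lambda>j. d - j"]) auto
  also have "(\<Sum>j\<in>{d<..2*d}. g j) = (\<Sum>i=1..d. g (d + i))"
    by (rule sum.reindex_bij_witness[of _ "\<lambda>i. d + i" "\<lambda>j. j - d"]) auto
  finally show ?thesis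
    by (simp add: sum.distrib algebra_simps)
qed

lemma esym_squares_nonneg: "esym n k (\<lambda>i. x i ^ 2) \<ge> 0"
  unfolding esym_def by (intro sum_nonneg prod_nonneg) auto

lemma esym_squares_le_pairs:
  "esym n d (\<lambda>i. x i ^ 2) \<le> esym n d x ^ 2 + 2 * (\<Sum>i=1..d. \<bar>esym n (d - i) x * esym n (d + i) x\<bar>)"
proof -
  define f where "f j = \<bar>esym n j x * esym n (2*d - j) x\<bar>" for j
  have "esym n d (\<lambda>i. x i ^ 2) = \<bar>(-1)^d * esym n d (\<lambda>i. x i ^ 2)\<bar>"
    using esym_squares_nonneg[of n d x] by (simp add: abs_mult)
  also have "\<dots> = \<bar>\<Sum>j\<le>2*d. (-1)^j * (esym n j x * esym n (2*d - j) x)\<bar>"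
    by (simp add: esym_eq_elem_sym elem_sym_squares)
  also have "\<dots> \<le> (\<Sum>j\<le>2*d. f j)"
    unfolding f_def by (rule order.trans[OF sum_abs]) (simp add: abs_mult)
  also have "\<dots> = f d + (\<Sum>i=1..d. f (d - i) + f (d + i))"
    by (rule sum_atMost_double)
  also have "\<dots> = esym n d x ^ 2 + 2 * (\<Sum>i=1..d. \<bar>esym n (d - i) x * esym n (d + i) x\<bar>)"
    by (auto simp: f_def power2_eq_square sum_distrib_left mult.commute intro!: sum.cong)
  finally show ?thesis .
qed

lemma poly_pderiv_prod_linear:
  fixes a :: "nat \<Rightarrow> 'a::field"
  assumes "\<And>j. j < n \<Longrightarrow> z + a j \<noteq> 0"
  shows "poly (pderiv (\<Prod>i<n. [:a i, 1:])) z = poly (\<Prod>i<n. [:a i, 1:]) z * (\<Sum>j<n. 1 / (z + a j))"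
proof -
  have "poly (pderiv (\<Prod>i<n. [:a i, 1:])) z = (\<Sum>j<n. \<Prod>l\<in>{..<n} - {j}. z + a l)"
    by (simp add: pderiv_prod pderiv_pCons poly_sum poly_prod add.commute)
  also have "\<dots> = (\<Sum>j<n. (\<Prod>l<n. z + a l) / (z + a j))"
  proof (rule sum.cong[OF refl])
    fix j assume "j \<in> {..<n}"
    then have "(\<Prod>l<n. z + a l) = (z + a j) * (\<Prod>l\<in>{..<n} - {j}. z + a l)"
      by (subst prod.remove[of _ j]) auto
    with assms \<open>j \<in> {..<n}\<close> show "(\<Prod>l\<in>{..<n} - {j}. z + a l) = (\<Prod>l<n. z + a l) / (z + a j)"
      by simp
  qed
  finally show ?thesis
    by (simp add: poly_prod add.commute sum_distrib_left)
qed

text \<open>For non-real \<open>z\<close> every term \<open>1 / (z + c j)\<close> has imaginary part of sign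
  \<open>- sgn (Im z)\<close>, so the logarithmic derivative of the product does not vanish at \<open>z\<close>.\<close>

lemma pderiv_prod_linear_root_real:
  fixes c :: "nat \<Rightarrow> real"
  assumes "n > 0" and "poly (pderiv (\<Prod>i<n. [:complex_of_real (c i), 1:])) z = 0"
  shows "Im z = 0"
proof (rule ccontr)
  assume "Im z \<noteq> 0"
  then have nz: "z + complex_of_real (c j) \<noteq> 0" for j
    by (auto simp: complex_eq_iff)
  then have "poly (\<Prod>i<n. [:complex_of_real (c i), 1:]) z \<noteq> 0"
    by (simp add: poly_prod add.commute)
  with assms(2) have "(\<Sum>j<n. 1 / (z + complex_of_real (c j))) = 0"
    by (simp add: poly_pderiv_prod_linear[OF nz])
  moreover have "Im (\<Sum>j<n. 1 / (z + complex_of_real (c j)))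
      = - Im z * (\<Sum>j<n. 1 / (cmod (z + complex_of_real (c j)))\<^sup>2)"
    by (simp add: Im_sum Im_divide' sum_distrib_left)
  ultimately have "Im z * (\<Sum>j<n. 1 / (cmod (z + complex_of_real (c j)))\<^sup>2) = 0"
    by simp
  moreover have "(\<Sum>j<n. 1 / (cmod (z + complex_of_real (c j)))\<^sup>2) > 0"
    using \<open>n > 0\<close> nz by (intro sum_pos) auto
  ultimately show False
    using \<open>Im z \<noteq> 0\<close> by simp
qed

lemma pderiv_prod_linear_real_factor:
  fixes c :: "nat \<Rightarrow> real"
  assumes "n > 0"
  obtains y :: "nat \<Rightarrow> real" where
    "pderiv (\<Prod>i<n. [:complex_of_real (c i), 1:]) = smult (of_nat n) (\<Prod>i<n-1. [:complex_of_real (y i), 1:])"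
proof -
  define P where "P = (\<Prod>i<n. [:complex_of_real (c i), 1:])"
  have "degree P = n"
    unfolding P_def by (simp add: degree_prod_sum_eq)
  moreover have "lead_coeff P = 1"
    unfolding P_def by (simp only: lead_coeff_prod) simp
  ultimately have deg: "degree (pderiv P) = n - 1" and lc: "lead_coeff (pderiv P) = of_nat n"
    using assms by (simp_all add: degree_pderiv coeff_pderiv)
  obtain root where root: "smult (of_nat n) (\<Prod>i<n-1. [:- root i, 1:]) = pderiv P"
    using complex_poly_decompose'[of "pderiv P"] by (metis deg lc)
  have "Im (root i) = 0" if "i < n - 1" for i
  proof (rule pderiv_prod_linear_root_real[OF assms])
    show "poly (pderiv (\<Prod>i<n. [:complex_of_real (c i), 1:])) (root i) = 0"
      using that by (auto simp flip: P_def root simp: poly_prod)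
  qed
  then have "(\<Prod>i<n-1. [:- root i, 1:]) = (\<Prod>i<n-1. [:complex_of_real (- Re (root i)), 1:])"
    by (intro prod.cong) (auto simp: complex_eq_iff)
  with root show ?thesis
    by (intro that[of "\<lambda>i. - Re (root i)"]) (simp add: P_def)
qed

lemma exists_esym_derivative:
  fixes x :: "nat \<Rightarrow> real"
  assumes "n > 0"
  obtains y where "\<And>j. j \<le> n - 1 \<Longrightarrow> real n * esym (n-1) j y = real (n - j) * esym n j x"
proof -
  let ?c = "\<lambda>i. complex_of_real (x i)"
  obtain y where y: "pderiv (\<Prod>i<n. [:?c i, 1:]) = smult (of_nat n) (\<Prod>i<n-1. [:complex_of_real (y i), 1:])"
    using pderiv_prod_linear_real_factor[OF assms] by blast
  have "real n * esym (n-1) j y = real (n - j) * esym n j x" if "j \<le> n - 1" for j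
  proof -
    define k where "k = n - 1 - j"
    have k: "k \<le> n - 1" "n - 1 - k = j" "Suc k \<le> n" "n - Suc k = j" "Suc k = n - j"
      using that assms by (auto simp: k_def)
    have "of_nat (n - j) * elem_sym n j ?c = coeff (pderiv (\<Prod>i<n. [:?c i, 1:])) k"
      using k by (simp add: coeff_pderiv coeff_prod_monic_linear)
    also have "\<dots> = of_nat n * elem_sym (n-1) j (\<lambda>i. complex_of_real (y i))"
      using k by (simp add: y coeff_prod_monic_linear)
    finally have "complex_of_real (real (n - j) * esym n j x) = complex_of_real (real n * esym (n-1) j y)"
      by (simp add: elem_sym_of_real)
    then show ?thesis
      by (simp only: of_real_eq_iff)
  qed
  then show ?thesis
    using that by blast
qed

definition esym_mean :: "nat \<Rightarrow> nat \<Rightarrow> (nat \<Rightarrow> real) \<Rightarrow> real" where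
  "esym_mean n k x = esym n k x / real (n choose k)"

lemma esym_0 [simp]: "esym n 0 x = 1"
  by (simp add: esym_eq_elem_sym)

lemma esym_eq_0: "n < k \<Longrightarrow> esym n k x = 0"
  by (simp add: esym_eq_elem_sym elem_sym_eq_0)

lemma esym_self: "esym n n x = (\<Prod>i<n. x i)"
  by (simp add: esym_eq_elem_sym elem_sym_self)

lemma esym_mean_self: "esym_mean n n x = (\<Prod>i<n. x i)"
  by (simp add: esym_mean_def esym_self)

lemma exists_esym_mean_derivative:
  fixes x :: "nat \<Rightarrow> real"
  obtains y where "\<And>j. j \<le> n \<Longrightarrow> esym_mean n j y = esym_mean (Suc n) j x"
proof -
  obtain y where y: "\<And>j. j \<le> n \<Longrightarrow> real (Suc n) * esym n j y = real (Suc n - j) * esym (Suc n) j x"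
    using exists_esym_derivative[of "Suc n" x] by auto
  have "esym_mean n j y = esym_mean (Suc n) j x" if "j \<le> n" for j
  proof -
    have absorb: "real (Suc n - j) * real (Suc n choose j) = real (Suc n) * real (n choose j)"
      using binomial_absorb_comp[of "Suc n" j] by (metis diff_Suc_1 of_nat_mult)
    have "real (Suc n choose j) > 0" and "real (n choose j) > 0"
      using that by simp_all
    have "esym n j y = real (Suc n - j) * esym (Suc n) j x / real (Suc n)"
      using y[OF that] by (simp add: eq_divide_eq mult.commute)
    then have "esym_mean n j y = real (Suc n - j) * esym (Suc n) j x / (real (Suc n) * real (n choose j))"
      by (simp add: esym_mean_def)
    also have "\<dots> = real (Suc n - j) * real (Suc n choose j) * esym (Suc n) j x
        / (real (Suc n) * real (n choose j) * real (Suc n choose j))"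
      using \<open>real (Suc n choose j) > 0\<close> by simp
    also have "\<dots> = esym_mean (Suc n) j x"
      unfolding absorb using \<open>real (n choose j) > 0\<close> by (simp add: esym_mean_def)
    finally show ?thesis .
  qed
  then show ?thesis
    using that by blast
qed

lemma exists_esym_mean_prefix:
  fixes x :: "nat \<Rightarrow> real"
  assumes "m \<le> n"
  obtains y where "\<And>j. j \<le> m \<Longrightarrow> esym_mean m j y = esym_mean n j x"
  using assms
proof (induction n arbitrary: x thesis)
  case 0
  then show ?case by auto
next
  case (Suc n)
  show ?case
  proof (cases "m = Suc n")
    case True
    then show ?thesis using Suc.prems(1) by blast
  next
    case False
    with Suc.prems(2) have "m \<le> n" by simp
    obtain y where y: "\<And>j. j \<le> n \<Longrightarrow> esym_mean n j y = esym_mean (Suc n) j x"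
      using exists_esym_mean_derivative by blast
    obtain w where "\<And>j. j \<le> m \<Longrightarrow> esym_mean m j w = esym_mean n j y"
      using Suc.IH[OF _ \<open>m \<le> n\<close>] by blast
    with y \<open>m \<le> n\<close> show ?thesis
      by (intro Suc.prems(1)[of w]) simp
  qed
qed

lemma esym_inverse:
  fixes x :: "nat \<Rightarrow> real"
  assumes nz: "\<And>i. i < n \<Longrightarrow> x i \<noteq> 0" and "j \<le> n"
  shows "esym n j (\<lambda>i. 1 / x i) * (\<Prod>i<n. x i) = esym n (n - j) x"
proof -
  have "esym n j (\<lambda>i. 1 / x i) * (\<Prod>i<n. x i) = (\<Sum>S\<in>card_subsets n j. \<Prod>i\<in>{..<n} - S. x i)"
    unfolding esym_def sum_distrib_right
  proof (rule sum.cong[OF refl])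
    fix S assume "S \<in> card_subsets n j"
    then have S: "S \<subseteq> {..<n}" by simp
    have "(\<Prod>i\<in>S. 1 / x i) * (\<Prod>i\<in>S. x i) = 1"
      unfolding prod.distrib[symmetric] by (rule prod.neutral) (use nz S in auto)
    moreover have "(\<Prod>i<n. x i) = (\<Prod>i\<in>S. x i) * (\<Prod>i\<in>{..<n} - S. x i)"
      using prod.subset_diff[OF S, of x] by (simp add: mult.commute)
    ultimately show "(\<Prod>i\<in>S. 1 / x i) * (\<Prod>i<n. x i) = (\<Prod>i\<in>{..<n} - S. x i)"
      by (metis mult.assoc mult_1)
  qed
  also have "\<dots> = esym n (n - j) x"
    unfolding esym_def by (rule sum.reindex_bij_betw[OF bij_betw_compl_card_subsets[OF \<open>j \<le> n\<close>]])
  finally show ?thesis .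
qed

lemma esym_mean_inverse:
  fixes x :: "nat \<Rightarrow> real"
  assumes "\<And>i. i < n \<Longrightarrow> x i \<noteq> 0" and "j \<le> n"
  shows "esym_mean n j (\<lambda>i. 1 / x i) = esym_mean n (n - j) x / (\<Prod>i<n. x i)"
proof -
  have "(\<Prod>i<n. x i) \<noteq> 0"
    using assms(1) by simp
  with esym_inverse[OF assms] show ?thesis
    by (simp add: esym_mean_def binomial_symmetric[OF assms(2)] field_simps)
qed

text \<open>Passing to \<open>a + N\<close> variables cuts the sequence of means after index \<open>a + N\<close>; inverting the
  variables reverses it, so a second cut followed by a second inversion also removes the first
  \<open>a\<close> means.\<close>

lemma exists_esym_mean_window:
  fixes x :: "nat \<Rightarrow> real"
  assumes "a + N \<le> n" and "esym n a x \<noteq> 0" and "esym n (a + N) x \<noteq> 0"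
  obtains z l where "l \<noteq> 0" and "\<And>j. j \<le> N \<Longrightarrow> esym_mean n (a + j) x = l * esym_mean N j z"
proof -
  obtain w where w: "\<And>j. j \<le> a + N \<Longrightarrow> esym_mean (a + N) j w = esym_mean n j x"
    using exists_esym_mean_prefix[OF assms(1)] by blast
  have "esym_mean n a x \<noteq> 0" "esym_mean n (a + N) x \<noteq> 0"
    using assms by (auto simp: esym_mean_def)
  then have pw: "(\<Prod>i<a + N. w i) \<noteq> 0"
    using w[of "a + N"] by (simp add: esym_mean_self)
  then have w_nz: "\<And>i. i < a + N \<Longrightarrow> w i \<noteq> 0"
    by simp
  obtain v where v: "\<And>j. j \<le> N \<Longrightarrow> esym_mean N j v = esym_mean (a + N) j (\<lambda>i. 1 / w i)"
    using exists_esym_mean_prefix[of N "a + N"] by auto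
  have pv: "(\<Prod>i<N. v i) \<noteq> 0"
    using v[of N] w[of a] \<open>esym_mean n a x \<noteq> 0\<close> pw
    by (simp add: esym_mean_self esym_mean_inverse[OF w_nz])
  then have v_nz: "\<And>i. i < N \<Longrightarrow> v i \<noteq> 0"
    by simp
  show ?thesis
  proof (rule that[of "(\<Prod>i<a + N. w i) * (\<Prod>i<N. v i)" "\<lambda>i. 1 / v i"])
    show "(\<Prod>i<a + N. w i) * (\<Prod>i<N. v i) \<noteq> 0"
      using pw pv by simp
  next
    fix j assume "j \<le> N"
    then show "esym_mean n (a + j) x = (\<Prod>i<a + N. w i) * (\<Prod>i<N. v i) * esym_mean N j (\<lambda>i. 1 / v i)"
      using pw pv v[of "N - j"] w[of "a + j"]
      by (simp add: esym_mean_inverse[OF v_nz] esym_mean_inverse[OF w_nz])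
  qed
qed

text \<open>Split the product along each \<open>i\<close>-subset and its complement and apply AM-GM to the two
  halves.\<close>

lemma central_binomial_abs_prod_le:
  fixes z :: "nat \<Rightarrow> real"
  shows "real ((2*i) choose i) * \<bar>\<Prod>l<2*i. z l\<bar> \<le> esym (2*i) i (\<lambda>l. z l ^ 2)"
proof -
  let ?K = "card_subsets (2*i) i" and ?q = "\<lambda>S. \<Prod>l\<in>S. z l ^ 2"
  have "2 * \<bar>\<Prod>l<2*i. z l\<bar> \<le> ?q S + ?q ({..<2*i} - S)" if "S \<in> ?K" for S
  proof -
    have "\<bar>\<Prod>l<2*i. z l\<bar> = (\<Prod>l\<in>S. \<bar>z l\<bar>) * (\<Prod>l\<in>{..<2*i} - S. \<bar>z l\<bar>)"
      using that prod.subset_diff[of S "{..<2*i}" "\<lambda>l. \<bar>z l\<bar>"] by (simp add: abs_prod mult.commute)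
    moreover have "?q T = (\<Prod>l\<in>T. \<bar>z l\<bar>) ^ 2" for T
      by (simp add: prod_power_distrib[symmetric] flip: abs_prod)
    ultimately show ?thesis
      using sum_squares_bound[of "\<Prod>l\<in>S. \<bar>z l\<bar>" "\<Prod>l\<in>{..<2*i} - S. \<bar>z l\<bar>"] by simp
  qed
  then have "(\<Sum>S\<in>?K. 2 * \<bar>\<Prod>l<2*i. z l\<bar>) \<le> (\<Sum>S\<in>?K. ?q S + ?q ({..<2*i} - S))"
    by (rule sum_mono)
  also have "\<dots> = (\<Sum>S\<in>?K. ?q S) + (\<Sum>S\<in>?K. ?q ({..<2*i} - S))"
    by (rule sum.distrib)
  also have "(\<Sum>S\<in>?K. ?q ({..<2*i} - S)) = (\<Sum>S\<in>?K. ?q S)"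
    using sum.reindex_bij_betw[OF bij_betw_compl_card_subsets[of i "2*i"], of ?q] by simp
  finally show ?thesis
    by (simp add: esym_def card_card_subsets)
qed

lemma binomial_mult_binomial_le:
  assumes "a + 2 \<le> b"
  shows "(n choose a) * (n choose b) \<le> (n choose Suc a) * (n choose (b - 1))"
proof (cases "b \<le> n")
  case False
  then show ?thesis by (simp add: binomial_eq_0)
next
  case True
  have "Suc a * (n choose Suc a) = (n - a) * (n choose a)"
    using times_binomial_minus1_eq[of "Suc a" n] binomial_absorb_comp[of n a] True assms by simp
  moreover have "b * (n choose b) = (n - (b - 1)) * (n choose (b - 1))"
    using times_binomial_minus1_eq[of b n] binomial_absorb_comp[of n "b - 1"] True assms by simp
  ultimately have "((n choose Suc a) * (n choose (b - 1))) * (Suc a * (n - (b - 1)))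
      = ((n choose a) * (n choose b)) * (b * (n - a))"
    by (metis mult.assoc mult.commute)
  moreover have "Suc a * (n - (b - 1)) \<le> b * (n - a)"
    using True assms by (intro mult_le_mono) auto
  moreover have "Suc a * (n - (b - 1)) > 0"
    using True assms by simp
  ultimately show ?thesis
    by (metis mult_le_cancel2 mult_le_mono2 nat_less_le)
qed

lemma binomial_log_concave:
  assumes "i \<le> d"
  shows "real (n choose (d - i)) * real (n choose (d + i)) \<le> real (n choose d) ^ 2"
proof -
  have "(n choose (d - i)) * (n choose (d + i)) \<le> (n choose d) ^ 2"
    using assms
  proof (induction i)
    case 0
    then show ?case by (simp add: power2_eq_square)
  next
    case (Suc i)
    have "(n choose (d - Suc i)) * (n choose (d + Suc i)) \<le> (n choose (d - i)) * (n choose (d + i))"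
      using binomial_mult_binomial_le[of "d - Suc i" "d + Suc i" n] Suc.prems
      by (simp add: Suc_diff_Suc)
    with Suc show ?case by simp
  qed
  then show ?thesis
    by (metis of_nat_le_iff of_nat_mult of_nat_power)
qed

text \<open>By the window lemma the means of \<open>x\<close> with indices \<open>d - i, \<dots>, d + i\<close> are a common
  multiple of the means of some \<open>z\<close> of length \<open>2 * i\<close> with \<open>e_(i-1)(z) = 0\<close>. The outer
  product of \<open>z\<close> is then controlled by AM-GM and \<open>central\<close>, the binomial factors by log-concavity.\<close>

lemma esym_pair_le:
  fixes x :: "nat \<Rightarrow> real"
  assumes "2 \<le> i" and "i \<le> d" and "d + i \<le> n" and "esym n (d - 1) x = 0" and "B \<ge> 0"
    and central: "\<And>z::nat \<Rightarrow> real. esym (2*i) (i - 1) z = 0 \<Longrightarrow>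
      esym (2*i) i (\<lambda>l. z l ^ 2) \<le> B * esym (2*i) i z ^ 2"
  shows "\<bar>esym n (d - i) x * esym n (d + i) x\<bar> \<le> real ((2*i) choose i) * B * esym n d x ^ 2"
proof (cases "esym n (d - i) x = 0 \<or> esym n (d + i) x = 0")
  case True
  with \<open>B \<ge> 0\<close> show ?thesis by auto
next
  case False
  have window: "d - i + 2*i = d + i"
    using \<open>i \<le> d\<close> by simp
  have "d - i + 2*i \<le> n" "esym n (d - i) x \<noteq> 0" "esym n (d - i + 2*i) x \<noteq> 0"
    unfolding window using False assms(3) by simp_all
  then obtain z l where "l \<noteq> 0"
    and zl: "\<And>j. j \<le> 2*i \<Longrightarrow> esym_mean n (d - i + j) x = l * esym_mean (2*i) j z"
    by (rule exists_esym_mean_window) auto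
  define cz cA cB cD where "cz = real ((2*i) choose i)" and "cA = real (n choose (d - i))"
    and "cB = real (n choose (d + i))" and "cD = real (n choose d)"
  define M where "M = esym_mean (2*i) i z"
  have pos: "cz > 0" "cA > 0" "cB > 0" "cD > 0" "real (n choose (d - 1)) > 0" "real ((2*i) choose (i - 1)) > 0"
    using assms by (auto simp: cz_def cA_def cB_def cD_def)
  have "esym_mean n (d - 1) x = l * esym_mean (2*i) (i - 1) z"
    using zl[of "i - 1"] assms(1,2) by (simp add: Suc_diff_Suc numeral_2_eq_2)
  with \<open>l \<noteq> 0\<close> pos assms(4) have "esym (2*i) (i - 1) z = 0"
    by (simp add: esym_mean_def)
  then have "cz * \<bar>\<Prod>k<2*i. z k\<bar> \<le> B * esym (2*i) i z ^ 2"
    unfolding cz_def by (rule order.trans[OF central_binomial_abs_prod_le central])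
  also have "esym (2*i) i z = cz * M"
    using pos(1) by (simp add: M_def esym_mean_def cz_def)
  finally have "\<bar>\<Prod>k<2*i. z k\<bar> \<le> cz * B * M ^ 2"
    using pos(1) by (simp add: power2_eq_square field_simps)
  moreover have "esym n (d - i) x = cA * l"
    using zl[of 0] pos(2) by (simp add: esym_mean_def cA_def field_simps)
  moreover have "esym n (d + i) x = cB * l * (\<Prod>k<2*i. z k)"
    using zl[of "2*i"] pos(3) unfolding window esym_mean_self by (simp add: esym_mean_def cB_def field_simps)
  moreover have "esym n d x = cD * l * M"
    using zl[of i] pos(4) \<open>i \<le> d\<close> by (simp add: esym_mean_def cD_def M_def field_simps)
  moreover have "cA * cB \<le> cD ^ 2"
    unfolding cA_def cB_def cD_def using \<open>i \<le> d\<close> by (rule binomial_log_concave)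
  ultimately have "\<bar>esym n (d - i) x * esym n (d + i) x\<bar> = (cA * cB) * l\<^sup>2 * \<bar>\<Prod>k<2*i. z k\<bar>"
    using pos by (simp add: abs_mult power2_eq_square abs_mult_self_eq)
  also have "\<dots> \<le> (cA * cB) * l\<^sup>2 * (cz * B * M ^ 2)"
    using \<open>\<bar>\<Prod>k<2*i. z k\<bar> \<le> cz * B * M ^ 2\<close> pos by (intro mult_left_mono) auto
  also have "\<dots> \<le> cD ^ 2 * l\<^sup>2 * (cz * B * M ^ 2)"
    using \<open>cA * cB \<le> cD ^ 2\<close> pos \<open>B \<ge> 0\<close> by (intro mult_right_mono) auto
  also have "\<dots> = real ((2*i) choose i) * B * esym n d x ^ 2"
    using \<open>esym n d x = cD * l * M\<close> by (simp add: cz_def power2_eq_square)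
  finally show ?thesis .
qed

lemma esym_pair_le_pow4:
  fixes x :: "nat \<Rightarrow> real"
  assumes "2 \<le> i" and "i \<le> d" and "d + i \<le> n" and "esym n (d - 1) x = 0"
    and "\<And>z::nat \<Rightarrow> real. esym (2*i) (i - 1) z = 0 \<Longrightarrow>
      esym (2*i) i (\<lambda>l. z l ^ 2) \<le> 4 ^ (i*i) * esym (2*i) i z ^ 2"
  shows "\<bar>esym n (d - i) x * esym n (d + i) x\<bar> \<le> 4 ^ (i * (i + 1)) * esym n d x ^ 2"
proof -
  have "real ((2*i) choose i) \<le> 4 ^ i"
    using binomial_le_pow2[of "2*i" i] by (simp add: power_mult flip: of_nat_le_iff)
  then have "real ((2*i) choose i) * 4 ^ (i*i) \<le> 4 ^ (i * (i + 1))"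
    by (simp add: power_add mult.commute)
  have "\<bar>esym n (d - i) x * esym n (d + i) x\<bar> \<le> real ((2*i) choose i) * 4 ^ (i*i) * esym n d x ^ 2"
    by (rule esym_pair_le[OF assms(1-4) _ assms(5)]) simp
  also have "\<dots> \<le> 4 ^ (i * (i + 1)) * esym n d x ^ 2"
    using \<open>real ((2*i) choose i) * 4 ^ (i*i) \<le> 4 ^ (i * (i + 1))\<close> by (rule mult_right_mono) simp
  finally show ?thesis .
qed

lemma four_times_le_four_power: "4 * n \<le> (4::nat) ^ n"
proof (cases n)
  case (Suc k)
  have "Suc k \<le> 2 ^ k"
    by (simp add: Suc_le_eq)
  also have "(2::nat) ^ k \<le> 4 ^ k"
    by (simp add: power_mono)
  finally show ?thesis
    using Suc by simp
qed simp

lemma two_le_of_esym_pred_eq_0: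
  assumes "esym n (d - 1) x = 0"
  shows "2 \<le> d"
proof (rule ccontr)
  assume "\<not> 2 \<le> d"
  then have "d - 1 = 0"
    by simp
  with assms show False
    by simp
qed

lemma esym_squares_le_central:
  fixes z :: "nat \<Rightarrow> real"
  assumes "esym (2*d) (d - 1) z = 0"
  shows "esym (2*d) d (\<lambda>l. z l ^ 2) \<le> 4 ^ (d*d) * esym (2*d) d z ^ 2"
  using assms
proof (induction d arbitrary: z rule: less_induct)
  case (less d)
  define e where "e j = esym (2*d) j z" for j
  define Z where "Z = esym (2*d) d (\<lambda>l. z l ^ 2)"
  define Q where "Q = (4::real) ^ (d*d - d)"
  have "2 \<le> d"
    using less.prems by (rule two_le_of_esym_pred_eq_0)
  then obtain d' where d': "d = Suc d'" and "d' \<ge> 1"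
    by (cases d) auto
  have outer: "\<bar>e 0 * e (2*d)\<bar> \<le> Z / 4"
  proof -
    have "4 \<le> real ((2*d) choose d)"
      using binomial_mono[of 1 d "2*d"] d' \<open>d' \<ge> 1\<close> by (simp flip: of_nat_le_iff)
    moreover have "real ((2*d) choose d) * \<bar>e 0 * e (2*d)\<bar> \<le> Z"
      using central_binomial_abs_prod_le[of d z] by (simp add: e_def Z_def esym_self)
    moreover have "4 * \<bar>e 0 * e (2*d)\<bar> \<le> real ((2*d) choose d) * \<bar>e 0 * e (2*d)\<bar>"
      using calculation(1) by (rule mult_right_mono) simp
    ultimately show ?thesis
      by linarith
  qed
  have inner: "\<bar>e (d - i) * e (d + i)\<bar> \<le> Q * e d ^ 2" if "i \<in> {1..d'}" for i
  proof (cases "i = 1")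
    case True
    then show ?thesis
      using less.prems by (simp add: e_def Q_def)
  next
    case False
    with that d' have "2 \<le> i" "i < d"
      by auto
    then have "\<bar>e (d - i) * e (d + i)\<bar> \<le> 4 ^ (i * (i + 1)) * e d ^ 2"
      unfolding e_def using less.prems less.IH by (intro esym_pair_le_pow4) auto
    also have "\<dots> \<le> Q * e d ^ 2"
    proof -
      have "i * (i + 1) \<le> d' * (d' + 1)"
        using \<open>i < d\<close> d' by (intro mult_le_mono) auto
      also have "\<dots> = d * d - d"
        by (simp add: d')
      finally show ?thesis
        unfolding Q_def by (intro mult_right_mono power_increasing) auto
    qed
    finally show ?thesis .
  qed
  have "(\<Sum>i=1..d. \<bar>e (d - i) * e (d + i)\<bar>)
      = (\<Sum>i=1..d'. \<bar>e (d - i) * e (d + i)\<bar>) + \<bar>e 0 * e (2*d)\<bar>"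
    by (simp add: d' mult_2)
  also have "\<dots> \<le> real d' * Q * e d ^ 2 + Z / 4"
  proof -
    have "(\<Sum>i=1..d'. \<bar>e (d - i) * e (d + i)\<bar>) \<le> (\<Sum>i=1..d'. Q * e d ^ 2)"
      by (rule sum_mono[OF inner])
    with outer show ?thesis
      by simp
  qed
  finally have "Z \<le> e d ^ 2 + 2 * (real d' * Q * e d ^ 2 + Z / 4)"
    using esym_squares_le_pairs[of "2*d" d z] by (simp add: e_def Z_def)
  then have "Z \<le> (2 + 4 * real d' * Q) * e d ^ 2"
    by (simp add: algebra_simps)
  also have "\<dots> \<le> 4 ^ d * Q * e d ^ 2"
  proof (rule mult_right_mono)
    have "Q \<ge> 1"
      by (simp add: Q_def)
    then have "2 + 4 * real d' * Q \<le> real (4 * d) * Q"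
      by (simp add: d' algebra_simps)
    also have "real (4 * d) \<le> real (4 ^ d)"
      by (simp only: of_nat_le_iff four_times_le_four_power)
    finally show "2 + 4 * real d' * Q \<le> 4 ^ d * Q"
      using \<open>Q \<ge> 1\<close> by simp
  qed simp
  also have "4 ^ d * Q = 4 ^ (d*d)"
    by (simp add: Q_def d' flip: power_add)
  finally show ?case
    by (simp add: Z_def e_def)
qed

lemma esym_squares_le_of_esym_pred_eq_0:
  fixes x :: "nat \<Rightarrow> real"
  assumes "esym n (d - 1) x = 0"
  shows "esym n d (\<lambda>i. x i ^ 2) \<le> (1 + 2 * (\<Sum>i=2..min d (n - d). 4 ^ (i * (i + 1)))) * esym n d x ^ 2"
proof -
  define t where "t = min d (n - d)"
  define T where "T i = \<bar>esym n (d - i) x * esym n (d + i) x\<bar>" for i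
  have "T i \<le> (if i \<in> {2..t} then 4 ^ (i * (i + 1)) * esym n d x ^ 2 else 0)" if "i \<in> {1..d}" for i
  proof (cases "i = 1 \<or> n < d + i")
    case True
    then show ?thesis
      using assms by (auto simp: T_def t_def esym_eq_0)
  next
    case False
    with that have "i \<in> {2..t}" "2 \<le> i" "i \<le> d" "d + i \<le> n"
      by (auto simp: t_def)
    then show ?thesis
      using esym_pair_le_pow4[OF \<open>2 \<le> i\<close> \<open>i \<le> d\<close> \<open>d + i \<le> n\<close> assms esym_squares_le_central]
      by (simp add: T_def)
  qed
  then have "(\<Sum>i=1..d. T i) \<le> (\<Sum>i=1..d. if i \<in> {2..t} then 4 ^ (i * (i + 1)) * esym n d x ^ 2 else 0)"
    by (rule sum_mono)
  also have "\<dots> = (\<Sum>i\<in>{1..d} \<inter> {2..t}. 4 ^ (i * (i + 1)) * esym n d x ^ 2)"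
    by (rule sum.inter_restrict[symmetric]) simp
  also have "{1..d} \<inter> {2..t} = {2..t}"
    by (auto simp: t_def)
  also have "(\<Sum>i\<in>{2..t}. 4 ^ (i * (i + 1)) * esym n d x ^ 2) = (\<Sum>i=2..t. 4 ^ (i * (i + 1))) * esym n d x ^ 2"
    by (rule sum_distrib_right[symmetric])
  finally show ?thesis
    using esym_squares_le_pairs[of n d x] by (simp add: T_def t_def algebra_simps)
qed

lemma binomial_sq_mult_le:
  "(n choose d) ^ 2 * (1 + 2 * (\<Sum>i=2..min d (n - d). 4 ^ (i * (i + 1))))
    \<le> (2 * n ^ (d + 1)) ^ (2 * (n - d))"
proof -
  define m where "m = n - d"
  define t where "t = min d m"
  have binom: "n choose d \<le> n ^ m"
  proof (cases "d \<le> n")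
    case True
    then show ?thesis
      using binomial_le_pow[of m n] by (simp add: m_def binomial_symmetric[OF True])
  qed (simp add: binomial_eq_0)
  have base: "n \<le> 2 * n ^ (d + 1)"
  proof (cases "n = 0")
    case False
    then have "n \<le> n ^ (d + 1)"
      by (intro self_le_power) auto
    then show ?thesis
      by simp
  qed simp
  show ?thesis
  proof (cases "t < 2")
    case True
    then have "(n choose d) ^ 2 \<le> (n ^ m) ^ 2"
      using binom by (simp add: power_mono)
    also have "\<dots> = n ^ (2 * m)"
      by (simp flip: power_mult add: mult.commute)
    also have "\<dots> \<le> (2 * n ^ (d + 1)) ^ (2 * m)"
      using base by (rule power_mono) simp
    finally show ?thesis
      using True by (simp add: m_def t_def)
  next
    case False
    then have "2 \<le> t" "t \<le> d" "t \<le> m" "t \<le> n" "4 \<le> n"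
      by (auto simp: t_def m_def)
    define c :: nat where "c = 4 ^ (t * (t + 1))"
    have "(\<Sum>i=2..t. (4::nat) ^ (i * (i + 1))) \<le> (\<Sum>i=2..t. c)"
      unfolding c_def by (intro sum_mono power_increasing mult_le_mono) auto
    also have "\<dots> = (t - 1) * c"
      by simp
    finally have "1 + 2 * (\<Sum>i=2..t. (4::nat) ^ (i * (i + 1))) \<le> 1 + 2 * (t - 1) * c"
      by simp
    also have "\<dots> \<le> (2 * t) * c"
      using \<open>2 \<le> t\<close> by (cases t) (simp_all add: c_def algebra_simps)
    also have "\<dots> \<le> n ^ 2 * n ^ (t * (t + 1))"
      unfolding c_def
    proof (rule mult_mono)
      show "2 * t \<le> n ^ 2"
        using \<open>t \<le> n\<close> \<open>4 \<le> n\<close> mult_le_mono[of 2 n t n] by (simp add: power2_eq_square)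
      show "(4::nat) ^ (t * (t + 1)) \<le> n ^ (t * (t + 1))"
        using \<open>4 \<le> n\<close> by (rule power_mono) simp
    qed simp_all
    also have "\<dots> = n ^ (t * (t + 1) + 2)"
      by (simp only: power_add mult.commute)
    finally have K: "1 + 2 * (\<Sum>i=2..t. (4::nat) ^ (i * (i + 1))) \<le> n ^ (t * (t + 1) + 2)" .
    have "t * (t + 1) + 2 \<le> 2 * m * d"
    proof -
      have "t * t \<le> m * d"
        using \<open>t \<le> d\<close> \<open>t \<le> m\<close> by (intro mult_le_mono) auto
      moreover have "m * 2 \<le> m * d"
        using \<open>2 \<le> t\<close> \<open>t \<le> d\<close> by (intro mult_le_mono2) simp
      then have "t + 2 \<le> m * d"
        using \<open>t \<le> m\<close> \<open>2 \<le> t\<close> by linarith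
      ultimately show ?thesis
        by (simp add: algebra_simps)
    qed
    have "(n choose d) ^ 2 * (1 + 2 * (\<Sum>i=2..t. 4 ^ (i * (i + 1)))) \<le> (n ^ m) ^ 2 * n ^ (t * (t + 1) + 2)"
      using binom K by (intro mult_mono power_mono) auto
    also have "\<dots> = n ^ (2 * m + (t * (t + 1) + 2))"
      by (simp add: power_add mult.commute flip: power_mult)
    also have "\<dots> \<le> n ^ ((d + 1) * (2 * m))"
      using \<open>t * (t + 1) + 2 \<le> 2 * m * d\<close> \<open>4 \<le> n\<close>
      by (intro power_increasing) (auto simp: algebra_simps)
    also have "\<dots> = (n ^ (d + 1)) ^ (2 * m)"
      by (rule power_mult)
    also have "\<dots> \<le> (2 * n ^ (d + 1)) ^ (2 * m)"
      by (rule power_mono) simp_all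
    finally show ?thesis
      by (simp add: m_def t_def)
  qed
qed

lemma mprod_sq_le_esym_squares:
  fixes x :: "nat \<Rightarrow> real"
  assumes "d \<le> n"
  shows "mprod n d x ^ 2 \<le> esym n d (\<lambda>i. x i ^ 2)"
proof -
  have "{..<d} \<in> card_subsets n d"
    using assms by auto
  then have "card_subsets n d \<noteq> {}"
    by blast
  then have "mprod n d x \<in> (\<lambda>S. \<Prod>i\<in>S. \<bar>x i\<bar>) ` card_subsets n d"
    unfolding mprod_def by (intro Max_in) simp_all
  then obtain S where S: "S \<in> card_subsets n d" and "mprod n d x = (\<Prod>i\<in>S. \<bar>x i\<bar>)"
    by blast
  then have "mprod n d x ^ 2 = (\<Prod>i\<in>S. x i ^ 2)"
    by (simp add: prod_power_distrib[symmetric] flip: abs_prod)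
  also have "\<dots> \<le> (\<Sum>T\<in>card_subsets n d. \<Prod>i\<in>T. x i ^ 2)"
    using S by (intro member_le_sum prod_nonneg) auto
  finally show ?thesis
    by (simp add: esym_def)
qed

theorem lemma5:
  fixes n d :: nat and x :: "nat \<Rightarrow> real"
  assumes "1 \<le> d" and "d \<le> n"
    and "esym n (d - 1) x = 0"
  shows "\<bar>esym n d x\<bar> \<ge> real (n choose d) / (2 * real n ^ (d + 1)) ^ (n - d) * \<bar>mprod n d x\<bar>"
proof -
  define C where "C = real (n choose d)"
  define D where "D = (2 * real n ^ (d + 1)) ^ (n - d)"
  define K :: real where "K = 1 + 2 * (\<Sum>i=2..min d (n - d). 4 ^ (i * (i + 1)))"
  have "real ((n choose d) ^ 2 * (1 + 2 * (\<Sum>i=2..min d (n - d). 4 ^ (i * (i + 1)))))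
      \<le> real ((2 * n ^ (d + 1)) ^ (2 * (n - d)))"
    by (simp only: of_nat_le_iff binomial_sq_mult_le)
  then have "C ^ 2 * K \<le> D ^ 2"
    unfolding C_def D_def K_def by (simp add: power_mult mult.commute distrib_left)
  have "C ^ 2 * mprod n d x ^ 2 \<le> C ^ 2 * (K * esym n d x ^ 2)"
    using order.trans[OF mprod_sq_le_esym_squares[OF assms(2)] esym_squares_le_of_esym_pred_eq_0[OF assms(3)]]
    unfolding K_def by (intro mult_left_mono) auto
  also have "\<dots> \<le> D ^ 2 * esym n d x ^ 2"
    using \<open>C ^ 2 * K \<le> D ^ 2\<close> by (simp add: mult.assoc[symmetric] mult_right_mono)
  finally have "C ^ 2 * mprod n d x ^ 2 \<le> D ^ 2 * esym n d x ^ 2" .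
  moreover have "D > 0"
    using assms by (simp add: D_def)
  ultimately have "(C / D * \<bar>mprod n d x\<bar>) ^ 2 \<le> \<bar>esym n d x\<bar> ^ 2"
    by (simp add: power_divide power_mult_distrib divide_le_eq mult.commute)
  then show ?thesis
    unfolding C_def D_def by (rule power2_le_imp_le) simp
qed

end
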